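(* Let $(\vec f,\vec\theta,\rho,\vec{\mathcal J})$ be a Definitional SMTO problem over a background theory $T$. (i) Every conjunction $A$ of assumptions generated by $\vec{\mathcal J}$ is $T$-satisfiable when $\vec\theta$ is treated as uninterpreted functions. (ii) The problem cannot be both satisfiable and unsatisfiable. (iii) Suppose $\exists\vec f.\forall\vec\theta.\,A\Rightarrow\rho$ is $T$-satisfiable for a conjunction $A$ of generated assumptions. Then $\exists\vec f.\forall\vec\theta.\,A'\Rightarrow\rho$ is $T$-satisfiable for every conjunction $A'\supseteq A$ of generated assumptions. That is, further oracle calls cannot invalidate a result of "satisfiable".
   Context: An oracle interface is a tuple $\mathcal I=(\vec y,\vec z,\alpha_{gen},\beta_{gen})$, where $\vec y$ (the query domain) and $\vec z$ (the response co-domain) are lists of sorted variables, and $\alpha_{gen}$ (the assumption generator) and $\beta_{gen}$ (the constraint generator) are formulas whose free variables are among $\vec y,\vec z$. Each oracle interface has an associated oracle, which on a tuple of values $\vec c$ of the sorts of $\vec y$ returns a tuple of values $\vec d$ of the sorts of $\vec z$. If calling the oracle on $\vec c$ returns $\vec d$, then $\alpha_{gen}\cdot\{\vec y\to\vec c,\vec z\to\vec d\}$ is an assumption generated by $\mathcal I$, and $\beta_{gen}\cdot\{\vec y\to\vec c,\vec z\to\vec d\}$ is a constraint generated by $\mathcal I$. Here $e\cdot\{x\to t\}$ denotes substitution and $\approx$ denotes equality. An SMTO problem is a tuple $(\vec f,\vec\theta,\rho,\vec{\mathcal I})$, where $\vec f$ are ordinary function symbols, $\vec\theta$ are oracle function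 symbols, $\rho$ is a formula in a background theory $T$ whose free function symbols are $\vec f\uplus\vec\theta$, and $\vec{\mathcal I}$ is a set of oracle interfaces. The problem is unsatisfiable if $\exists\vec f.\exists\vec\theta.\,A\wedge\rho\wedge B$ is $T$-unsatisfiable, and it is satisfiable if $\exists\vec f.\forall\vec\theta.\,A\Rightarrow(\rho\wedge B)$ is $T$-satisfiable. In each case $A$ (respectively $B$) is some conjunction of assumptions (respectively constraints) generated by $\vec{\mathcal I}$. An oracle interface $\mathcal J$ defines an oracle function symbol $\theta$ if it has the form $((y_1,\dots,y_j),(z),\ \theta(y_1,\dots,y_j)\approx z,\ \text{true})$ and its associated oracle is functional, i.e. it always returns the same output on the same input. An SMTO problem $(\vec f,\vec\theta,\rho,\vec{\mathcal J})$ is in Definitional SMTO if $\vec\theta=(\theta_1,\dots,\theta_n)$, $\vec{\mathcal J}=(\mathcal J_1,\dots,\mathcal J_n)$, and $\mathcal J_i$ defines $\theta_i$ for every $i$. In particular, all generated constraints are trivially true, so $B$ may be taken to be empty. *)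

theory Defs
  imports Main
begin

text \<open>A background theory T is given by its class of models, a set of structures of type 'm.
  Values are the elements of a fixed universe 'v (a value c denotes itself in every model).
  An interpretation of the ordinary symbols f is an element of type 'f, an interpretation of
  the oracle symbols theta is an element of type 't.  A formula whose free function symbols
  are among f and theta is identified with its meaning: a predicate on (model, f-interpretation,
  theta-interpretation).\<close>

type_synonym ('m, 'f, 't) fml = "'m \<Rightarrow> 'f \<Rightarrow> 't \<Rightarrow> bool"

text \<open>A family of oracle interfaces indexed by 'j: interface j has query arity qar j,
  response arity rar j, assumption generator alpha j, constraint generator beta j
  (both instantiated by the query values c and response values d), and its associated oracle,
  described by the relation resp j c d: "calling the oracle on c may return d".\<close>

definition gen_assumptions ::
  "('j \<Rightarrow> nat) \<Rightarrow> ('j \<Rightarrow> nat) \<Rightarrow> ('j \<Rightarrow> 'v list \<Rightarrow> 'v list \<Rightarrow> bool)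
   \<Rightarrow> ('j \<Rightarrow> 'v list \<Rightarrow> 'v list \<Rightarrow> ('m, 'f, 't) fml) \<Rightarrow> ('m, 'f, 't) fml set" where
  "gen_assumptions qar rar resp alpha =
     {alpha j c d | j c d. length c = qar j \<and> length d = rar j \<and> resp j c d}"

definition gen_constraints ::
  "('j \<Rightarrow> nat) \<Rightarrow> ('j \<Rightarrow> nat) \<Rightarrow> ('j \<Rightarrow> 'v list \<Rightarrow> 'v list \<Rightarrow> bool)
   \<Rightarrow> ('j \<Rightarrow> 'v list \<Rightarrow> 'v list \<Rightarrow> ('m, 'f, 't) fml) \<Rightarrow> ('m, 'f, 't) fml set" where
  "gen_constraints qar rar resp beta =
     {beta j c d | j c d. length c = qar j \<and> length d = rar j \<and> resp j c d}"

definition conj_all :: "('m, 'f, 't) fml set \<Rightarrow> ('m, 'f, 't) fml" where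
  "conj_all A = (\<lambda>M F \<Theta>. \<forall>a\<in>A. a M F \<Theta>)"

definition SMTO_unsat ::
  "'m set \<Rightarrow> ('m, 'f, 't) fml \<Rightarrow> ('j \<Rightarrow> nat) \<Rightarrow> ('j \<Rightarrow> nat) \<Rightarrow> ('j \<Rightarrow> 'v list \<Rightarrow> 'v list \<Rightarrow> bool)
   \<Rightarrow> ('j \<Rightarrow> 'v list \<Rightarrow> 'v list \<Rightarrow> ('m, 'f, 't) fml)
   \<Rightarrow> ('j \<Rightarrow> 'v list \<Rightarrow> 'v list \<Rightarrow> ('m, 'f, 't) fml) \<Rightarrow> bool" where
  "SMTO_unsat T rho qar rar resp alpha beta \<longleftrightarrow>
     (\<exists>A B. finite A \<and> A \<subseteq> gen_assumptions qar rar resp alpha \<and>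
            finite B \<and> B \<subseteq> gen_constraints qar rar resp beta \<and>
            \<not> (\<exists>M\<in>T. \<exists>F \<Theta>. conj_all A M F \<Theta> \<and> rho M F \<Theta> \<and> conj_all B M F \<Theta>))"

definition SMTO_sat ::
  "'m set \<Rightarrow> ('m, 'f, 't) fml \<Rightarrow> ('j \<Rightarrow> nat) \<Rightarrow> ('j \<Rightarrow> nat) \<Rightarrow> ('j \<Rightarrow> 'v list \<Rightarrow> 'v list \<Rightarrow> bool)
   \<Rightarrow> ('j \<Rightarrow> 'v list \<Rightarrow> 'v list \<Rightarrow> ('m, 'f, 't) fml)
   \<Rightarrow> ('j \<Rightarrow> 'v list \<Rightarrow> 'v list \<Rightarrow> ('m, 'f, 't) fml) \<Rightarrow> bool" where
  "SMTO_sat T rho qar rar resp alpha beta \<longleftrightarrow>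
     (\<exists>A B. finite A \<and> A \<subseteq> gen_assumptions qar rar resp alpha \<and>
            finite B \<and> B \<subseteq> gen_constraints qar rar resp beta \<and>
            (\<exists>M\<in>T. \<exists>F. \<forall>\<Theta>. conj_all A M F \<Theta> \<longrightarrow> rho M F \<Theta> \<and> conj_all B M F \<Theta>))"

text \<open>Interface i defines the oracle function symbol theta_i, where the oracle symbols are
  interpreted by \<Theta> :: 'i => 'v list => 'v (theta_i applied to the argument tuple c is \<Theta> i c):
  the response is a single value z, the assumption generator is theta_i(y) = z, the
  constraint generator is true, and the oracle is functional.\<close>
definition defines_oracle ::
  "('i \<Rightarrow> nat) \<Rightarrow> ('i \<Rightarrow> 'v list \<Rightarrow> 'v list \<Rightarrow> bool)
   \<Rightarrow> ('i \<Rightarrow> 'v list \<Rightarrow> 'v list \<Rightarrow> ('m, 'f, 'i \<Rightarrow> 'v list \<Rightarrow> 'v) fml)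
   \<Rightarrow> ('i \<Rightarrow> 'v list \<Rightarrow> 'v list \<Rightarrow> ('m, 'f, 'i \<Rightarrow> 'v list \<Rightarrow> 'v) fml) \<Rightarrow> 'i \<Rightarrow> bool" where
  "defines_oracle rar resp alpha beta i \<longleftrightarrow>
     rar i = 1 \<and>
     (\<forall>c z. alpha i c [z] = (\<lambda>M F \<Theta>. \<Theta> i c = z)) \<and>
     (\<forall>c d. beta i c d = (\<lambda>M F \<Theta>. True)) \<and>
     (\<forall>c d d'. resp i c d \<longrightarrow> resp i c d' \<longrightarrow> d = d')"

definition definitional ::
  "('i \<Rightarrow> nat) \<Rightarrow> ('i \<Rightarrow> 'v list \<Rightarrow> 'v list \<Rightarrow> bool)
   \<Rightarrow> ('i \<Rightarrow> 'v list \<Rightarrow> 'v list \<Rightarrow> ('m, 'f, 'i \<Rightarrow> 'v list \<Rightarrow> 'v) fml)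
   \<Rightarrow> ('i \<Rightarrow> 'v list \<Rightarrow> 'v list \<Rightarrow> ('m, 'f, 'i \<Rightarrow> 'v list \<Rightarrow> 'v) fml) \<Rightarrow> bool" where
  "definitional rar resp alpha beta \<longleftrightarrow> (\<forall>i. defines_oracle rar resp alpha beta i)"

end

theory Submission
  imports Defs
begin

text \<open>Since every interface of a definitional problem is a functional oracle for a single
  symbol, the oracle itself yields one interpretation of the oracle symbols under which every
  generated assumption holds, in every model and for every interpretation of the ordinary
  symbols; generated constraints are trivially true.  This gives (i), and it refutes
  unsatisfiability: instantiating the universally quantified oracle symbols of a satisfiability
  witness by the oracle interpretation produces a model of A, rho and B.  Part (iii) is
  monotonicity: a larger conjunction of assumptions weakens the implication.\<close>

definition oracle_interp :: "('i \<Rightarrow> 'v list \<Rightarrow> 'v list \<Rightarrow> bool) \<Rightarrow> 'i \<Rightarrow> 'v list \<Rightarrow> 'v" where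
  "oracle_interp resp = (\<lambda>i c. hd (SOME d. resp i c d))"

lemma conj_all_antimono:
  assumes "A \<subseteq> A'" and "conj_all A' M F \<Theta>"
  shows "conj_all A M F \<Theta>"
  using assms unfolding conj_all_def by blast

lemma oracle_interp_response:
  assumes "defines_oracle rar resp alpha beta i" and "resp i c [z]"
  shows "oracle_interp resp i c = z"
proof -
  have "resp i c d \<Longrightarrow> d = [z]" for d
    using assms unfolding defines_oracle_def by blast
  then have "(SOME d. resp i c d) = [z]"
    using assms(2) by (rule some_equality[rotated])
  then show ?thesis unfolding oracle_interp_def by simp
qed

lemma defines_oracle_assumption_holds:
  assumes defi: "defines_oracle rar resp alpha beta i"
    and "length d = rar i" and "resp i c d"
  shows "alpha i c d M F (oracle_interp resp)"
proof -
  have alpha_eq: "alpha i c [z] = (\<lambda>M F \<Theta>. \<Theta> i c = z)" for z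
    using defi unfolding defines_oracle_def by blast
  have "length d = 1"
    using assms unfolding defines_oracle_def by argo
  then obtain z where d: "d = [z]" by (cases d) auto
  then have "oracle_interp resp i c = z"
    using oracle_interp_response[OF defi] assms(3) by simp
  then show ?thesis using alpha_eq d by simp
qed

lemma definitional_conj_gen_assumptions:
  assumes "definitional rar resp alpha beta"
    and "A \<subseteq> gen_assumptions qar rar resp alpha"
  shows "conj_all A M F (oracle_interp resp)"
  unfolding conj_all_def
proof
  fix a assume "a \<in> A"
  then obtain i c d where "a = alpha i c d" "length d = rar i" "resp i c d"
    using assms(2) unfolding gen_assumptions_def by blast
  moreover have "defines_oracle rar resp alpha beta i"
    using assms(1) unfolding definitional_def ..
  ultimately show "a M F (oracle_interp resp)"
    using defines_oracle_assumption_holds by simp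
qed

lemma definitional_conj_gen_constraints:
  assumes "definitional rar resp alpha beta"
    and "B \<subseteq> gen_constraints qar rar resp beta"
  shows "conj_all B M F \<Theta>"
  unfolding conj_all_def
proof
  fix b assume "b \<in> B"
  then obtain i c d where "b = beta i c d"
    using assms(2) unfolding gen_constraints_def by blast
  have "defines_oracle rar resp alpha beta i"
    using assms(1) unfolding definitional_def ..
  then have "beta i c d = (\<lambda>M F \<Theta>. True)"
    unfolding defines_oracle_def by (elim conjE allE)
  with \<open>b = beta i c d\<close> show "b M F \<Theta>" by simp
qed

lemma definitional_gen_assumptions_satisfiable:
  assumes "T \<noteq> {}" and "definitional rar resp alpha beta"
    and "A \<subseteq> gen_assumptions qar rar resp alpha"
  shows "\<exists>M\<in>T. \<exists>F \<Theta>. conj_all A M F \<Theta>"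
proof -
  obtain M where "M \<in> T" using assms(1) by blast
  then show ?thesis using definitional_conj_gen_assumptions[OF assms(2,3)] by blast
qed

lemma definitional_not_sat_and_unsat:
  assumes defn: "definitional rar resp alpha beta"
  shows "\<not> (SMTO_sat T rho qar rar resp alpha beta \<and> SMTO_unsat T rho qar rar resp alpha beta)"
proof
  assume h: "SMTO_sat T rho qar rar resp alpha beta \<and> SMTO_unsat T rho qar rar resp alpha beta"
  then obtain A M F where A: "A \<subseteq> gen_assumptions qar rar resp alpha" and M: "M \<in> T"
    and F: "\<forall>\<Theta>. conj_all A M F \<Theta> \<longrightarrow> rho M F \<Theta>"
    unfolding SMTO_sat_def by blast
  from h obtain A' B' where A': "A' \<subseteq> gen_assumptions qar rar resp alpha"
    and B': "B' \<subseteq> gen_constraints qar rar resp beta"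
    and unsat: "\<not> (\<exists>M\<in>T. \<exists>F \<Theta>. conj_all A' M F \<Theta> \<and> rho M F \<Theta> \<and> conj_all B' M F \<Theta>)"
    unfolding SMTO_unsat_def by blast
  let ?\<Theta> = "oracle_interp resp"
  have "rho M F ?\<Theta>" using F definitional_conj_gen_assumptions[OF defn A] by blast
  moreover have "conj_all A' M F ?\<Theta>" using definitional_conj_gen_assumptions[OF defn A'] .
  moreover have "conj_all B' M F ?\<Theta>" using definitional_conj_gen_constraints[OF defn B'] .
  ultimately show False using unsat M by blast
qed

lemma sat_under_assumptions_mono:
  assumes "A \<subseteq> A'" and "\<exists>M\<in>T. \<exists>F. \<forall>\<Theta>. conj_all A M F \<Theta> \<longrightarrow> rho M F \<Theta>"
  shows "\<exists>M\<in>T. \<exists>F. \<forall>\<Theta>. conj_all A' M F \<Theta> \<longrightarrow> rho M F \<Theta>"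
  using assms(2) conj_all_antimono[OF assms(1)] by blast

theorem mainTheorem2:
  fixes T :: "'m set"
    and rho :: "('m, 'f, 'i \<Rightarrow> 'v list \<Rightarrow> 'v) fml"
    and qar rar :: "'i \<Rightarrow> nat"
    and resp :: "'i \<Rightarrow> 'v list \<Rightarrow> 'v list \<Rightarrow> bool"
    and alpha beta :: "'i \<Rightarrow> 'v list \<Rightarrow> 'v list \<Rightarrow> ('m, 'f, 'i \<Rightarrow> 'v list \<Rightarrow> 'v) fml"
  assumes T_consistent: "T \<noteq> {}"
    and defn: "definitional rar resp alpha beta"
  shows "(\<forall>A. finite A \<and> A \<subseteq> gen_assumptions qar rar resp alpha \<longrightarrow>
              (\<exists>M\<in>T. \<exists>F \<Theta>. conj_all A M F \<Theta>))
       \<and> \<not> (SMTO_sat T rho qar rar resp alpha beta \<and> SMTO_unsat T rho qar rar resp alpha beta)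
       \<and> (\<forall>A A'. finite A \<and> A \<subseteq> gen_assumptions qar rar resp alpha \<and>
                 finite A' \<and> A' \<subseteq> gen_assumptions qar rar resp alpha \<and> A \<subseteq> A' \<longrightarrow>
                 (\<exists>M\<in>T. \<exists>F. \<forall>\<Theta>. conj_all A M F \<Theta> \<longrightarrow> rho M F \<Theta>) \<longrightarrow>
                 (\<exists>M\<in>T. \<exists>F. \<forall>\<Theta>. conj_all A' M F \<Theta> \<longrightarrow> rho M F \<Theta>))"
proof (intro conjI allI impI)
  fix A assume "finite A \<and> A \<subseteq> gen_assumptions qar rar resp alpha"
  then show "\<exists>M\<in>T. \<exists>F \<Theta>. conj_all A M F \<Theta>"
    using definitional_gen_assumptions_satisfiable[OF T_consistent defn] by (elim conjE)
next
  show "\<not> (SMTO_sat T rho qar rar resp alpha beta \<and> SMTO_unsat T rho qar rar resp alpha beta)"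
    using definitional_not_sat_and_unsat[OF defn] .
next
  fix A A' :: "('m, 'f, 'i \<Rightarrow> 'v list \<Rightarrow> 'v) fml set"
  assume "finite A \<and> A \<subseteq> gen_assumptions qar rar resp alpha \<and>
    finite A' \<and> A' \<subseteq> gen_assumptions qar rar resp alpha \<and> A \<subseteq> A'"
  then have "A \<subseteq> A'" by (elim conjE)
  then show "(\<exists>M\<in>T. \<exists>F. \<forall>\<Theta>. conj_all A M F \<Theta> \<longrightarrow> rho M F \<Theta>) \<Longrightarrow>
      \<exists>M\<in>T. \<exists>F. \<forall>\<Theta>. conj_all A' M F \<Theta> \<longrightarrow> rho M F \<Theta>"
    by (rule sat_under_assumptions_mono)
qed

end
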